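(* Let $M$ be a compact $C^{\infty}$ Riemannian manifold and let $f,g,h$ be $C^{\infty}$-diffeomorphisms of $M$ satisfying $fh=hf$, $gh=hg$ and $[f,g]=h$ (so that they define an action of the Heisenberg group $\langle f,g,h\mid fh=hf,\ gh=hg,\ [f,g]=h\rangle$ on $M$). Then there exist constants $K,C>0$ such that $$\log\Vert Dh^{n}_{x}\Vert\leq K\sqrt{n}+C$$ for every $x\in M$ and every integer $n\geq 0$.
   Context: $Dh^{n}_{x}:T_xM\to T_{h^n(x)}M$ is the derivative of $h^{n}$ at $x$ and $\Vert\cdot\Vert$ is its operator norm with respect to the Riemannian metric. *)

theory Defs
  imports "HOL-Analysis.Analysis"
begin

primrec Ck_on :: "nat \<Rightarrow> 'a::euclidean_space set \<Rightarrow> ('a \<Rightarrow> 'b::real_normed_vector) \<Rightarrow> bool" where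
  "Ck_on 0 U f = continuous_on U f"
| "Ck_on (Suc k) U f =
     (\<exists>f'. (\<forall>x\<in>U. (f has_derivative f' x) (at x)) \<and> (\<forall>v. Ck_on k U (\<lambda>x. f' x v)))"

definition smooth_on :: "'a::euclidean_space set \<Rightarrow> ('a \<Rightarrow> 'b::real_normed_vector) \<Rightarrow> bool" where
  "smooth_on U f \<longleftrightarrow> (\<forall>k. Ck_on k U f)"

definition smooth_submanifold :: "'a::euclidean_space set \<Rightarrow> bool" where
  "smooth_submanifold M \<longleftrightarrow>
     (\<forall>p\<in>M. \<exists>U V (\<phi>::'a \<Rightarrow> 'a) \<psi> S. open U \<and> p \<in> U \<and> open V \<and> subspace S \<and>
        smooth_on U \<phi> \<and> smooth_on V \<psi> \<and> \<phi> ` U = V \<and>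
        (\<forall>x\<in>U. \<psi> (\<phi> x) = x) \<and> (\<forall>y\<in>V. \<phi> (\<psi> y) = y) \<and>
        \<phi> ` (M \<inter> U) = V \<inter> S)"

definition smooth_map_on :: "'a::euclidean_space set \<Rightarrow> ('a \<Rightarrow> 'a) \<Rightarrow> bool" where
  "smooth_map_on M f \<longleftrightarrow>
     (\<forall>p\<in>M. \<exists>U F. open U \<and> p \<in> U \<and> smooth_on U F \<and> (\<forall>x\<in>M \<inter> U. F x = f x))"

definition diffeomorphism_on :: "'a::euclidean_space set \<Rightarrow> ('a \<Rightarrow> 'a) \<Rightarrow> bool" where
  "diffeomorphism_on M f \<longleftrightarrow>
     bij_betw f M M \<and> smooth_map_on M f \<and> smooth_map_on M (inv_into M f)"

definition tangent_space :: "'a::euclidean_space set \<Rightarrow> 'a \<Rightarrow> 'a set" where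
  "tangent_space M x =
     {v. \<exists>\<gamma>. (\<forall>t. \<gamma> t \<in> M) \<and> \<gamma> 0 = x \<and> (\<gamma> has_vector_derivative v) (at 0)}"

definition mderiv :: "'a::euclidean_space set \<Rightarrow> ('a \<Rightarrow> 'a) \<Rightarrow> 'a \<Rightarrow> 'a \<Rightarrow> 'a" where
  "mderiv M f x v =
     (THE w. \<forall>\<gamma>. (\<forall>t. \<gamma> t \<in> M) \<and> \<gamma> 0 = x \<and> (\<gamma> has_vector_derivative v) (at 0)
                 \<longrightarrow> ((f \<circ> \<gamma>) has_vector_derivative w) (at 0))"

text \<open>Operator norm of Df_x w.r.t. the Riemannian metric induced by the ambient inner product.\<close>
definition mderiv_norm :: "'a::euclidean_space set \<Rightarrow> ('a \<Rightarrow> 'a) \<Rightarrow> 'a \<Rightarrow> real" where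
  "mderiv_norm M f x =
     Sup {norm (mderiv M f x v) | v. v \<in> tangent_space M x \<and> norm v \<le> 1}"

end

theory Submission
  imports Defs "HOL-Library.Discrete_Functions"
begin

(* The commutator relation gives h^(a*a) = f^a g^a f^-a g^-a on M, so by the chain rule the
  derivative of h^(a*a) is bounded by L^(4a), where L >= 1 bounds the derivatives along M of
  f, g, h and of the inverses of f and g (finitely many smooth self-maps of a compact set).
  Writing n = a*a + r with a = floor (sqrt n) and r <= 2a gives ||Dh^n|| <= L^(6a), hence
  ln ||Dh^n|| <= 6 ln L sqrt n. *)

definition has_curve_derivative ::
    "'a::euclidean_space set \<Rightarrow> ('a \<Rightarrow> 'a) \<Rightarrow> 'a \<Rightarrow> ('a \<Rightarrow> 'a) \<Rightarrow> bool" where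
  "has_curve_derivative M \<phi> x A \<longleftrightarrow>
     (\<forall>\<gamma> v. (\<forall>t. \<gamma> t \<in> M) \<and> \<gamma> 0 = x \<and> (\<gamma> has_vector_derivative v) (at 0)
        \<longrightarrow> ((\<phi> \<circ> \<gamma>) has_vector_derivative A v) (at 0))"

(* mderiv is a definite description, so bounds are carried by explicit derivative witnesses A,
  which compose by the chain rule, and only transferred to mderiv_norm at the end. *)
definition deriv_bounded_on :: "'a::euclidean_space set \<Rightarrow> ('a \<Rightarrow> 'a) \<Rightarrow> real \<Rightarrow> bool" where
  "deriv_bounded_on M \<phi> L \<longleftrightarrow> \<phi> ` M \<subseteq> M \<and>
     (\<forall>x\<in>M. \<exists>A. has_curve_derivative M \<phi> x A \<and> (\<forall>v\<in>tangent_space M x. norm (A v) \<le> L * norm v))"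

lemma deriv_bounded_onI:
  assumes "\<phi> ` M \<subseteq> M"
    and "\<And>x. x \<in> M \<Longrightarrow>
      \<exists>A. has_curve_derivative M \<phi> x A \<and> (\<forall>v\<in>tangent_space M x. norm (A v) \<le> L * norm v)"
  shows "deriv_bounded_on M \<phi> L"
  using assms unfolding deriv_bounded_on_def by blast

lemma deriv_bounded_onE:
  assumes "deriv_bounded_on M \<phi> L" "x \<in> M"
  obtains A where "has_curve_derivative M \<phi> x A"
    "\<And>v. v \<in> tangent_space M x \<Longrightarrow> norm (A v) \<le> L * norm v"
  using assms unfolding deriv_bounded_on_def by blast

lemma deriv_bounded_on_into: "deriv_bounded_on M \<phi> L \<Longrightarrow> x \<in> M \<Longrightarrow> \<phi> x \<in> M"
  unfolding deriv_bounded_on_def by blast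

lemma tangent_space_zero: "x \<in> M \<Longrightarrow> 0 \<in> tangent_space M x"
  unfolding tangent_space_def by (auto intro!: exI[of _ "\<lambda>t. x"])

lemma has_curve_derivative_tangent_space:
  assumes "has_curve_derivative M \<phi> x A" "\<phi> ` M \<subseteq> M" "v \<in> tangent_space M x"
  shows "A v \<in> tangent_space M (\<phi> x)"
proof -
  obtain \<gamma> where \<gamma>: "\<forall>t. \<gamma> t \<in> M" "\<gamma> 0 = x" "(\<gamma> has_vector_derivative v) (at 0)"
    using assms(3) unfolding tangent_space_def by blast
  then have "((\<phi> \<circ> \<gamma>) has_vector_derivative A v) (at 0)"
    using assms(1) unfolding has_curve_derivative_def by blast
  with \<gamma> assms(2) show ?thesis
    unfolding tangent_space_def by (intro CollectI exI[of _ "\<phi> \<circ> \<gamma>"]) auto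
qed

lemma has_curve_derivative_comp:
  assumes "has_curve_derivative M \<phi> x A" "has_curve_derivative M \<psi> (\<phi> x) B" "\<phi> ` M \<subseteq> M"
  shows "has_curve_derivative M (\<psi> \<circ> \<phi>) x (B \<circ> A)"
  unfolding has_curve_derivative_def
proof (intro allI impI)
  fix \<gamma> v assume \<gamma>: "(\<forall>t. \<gamma> t \<in> M) \<and> \<gamma> 0 = x \<and> (\<gamma> has_vector_derivative v) (at 0)"
  then have "((\<phi> \<circ> \<gamma>) has_vector_derivative A v) (at 0)"
    using assms(1) unfolding has_curve_derivative_def by blast
  moreover have "\<forall>t. (\<phi> \<circ> \<gamma>) t \<in> M" "(\<phi> \<circ> \<gamma>) 0 = \<phi> x"
    using \<gamma> assms(3) by auto
  ultimately have "((\<psi> \<circ> (\<phi> \<circ> \<gamma>)) has_vector_derivative B (A v)) (at 0)"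
    using assms(2) unfolding has_curve_derivative_def by blast
  then show "((\<psi> \<circ> \<phi> \<circ> \<gamma>) has_vector_derivative (B \<circ> A) v) (at 0)"
    by (simp add: comp_assoc)
qed

lemma deriv_bounded_on_cong:
  assumes "deriv_bounded_on M \<phi> L" "\<And>x. x \<in> M \<Longrightarrow> \<psi> x = \<phi> x"
  shows "deriv_bounded_on M \<psi> L"
proof -
  have "\<psi> \<circ> \<gamma> = \<phi> \<circ> \<gamma>" if "\<forall>t. \<gamma> t \<in> M" for \<gamma> :: "real \<Rightarrow> 'a"
    using that assms(2) by auto
  then have "has_curve_derivative M \<psi> x A = has_curve_derivative M \<phi> x A" for x A
    unfolding has_curve_derivative_def by metis
  moreover have "\<psi> ` M = \<phi> ` M"
    using assms(2) by auto
  ultimately show ?thesis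
    using assms(1) unfolding deriv_bounded_on_def by simp
qed

lemma deriv_bounded_on_mono:
  assumes "deriv_bounded_on M \<phi> L" "L \<le> L'"
  shows "deriv_bounded_on M \<phi> L'"
proof (rule deriv_bounded_onI)
  show "\<phi> ` M \<subseteq> M"
    using assms(1) unfolding deriv_bounded_on_def by blast
  fix x assume "x \<in> M"
  then obtain A where "has_curve_derivative M \<phi> x A"
      "\<And>v. v \<in> tangent_space M x \<Longrightarrow> norm (A v) \<le> L * norm v"
    by (rule deriv_bounded_onE[OF assms(1)]) (rule that)
  with assms(2)
  show "\<exists>A. has_curve_derivative M \<phi> x A \<and> (\<forall>v\<in>tangent_space M x. norm (A v) \<le> L' * norm v)"
    by (meson mult_right_mono norm_ge_zero order_trans)
qed

lemma deriv_bounded_on_comp: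
  assumes \<psi>: "deriv_bounded_on M \<psi> L'" and \<phi>: "deriv_bounded_on M \<phi> L" and "0 \<le> L'"
  shows "deriv_bounded_on M (\<psi> \<circ> \<phi>) (L' * L)"
proof (rule deriv_bounded_onI)
  have \<phi>_into: "\<phi> ` M \<subseteq> M"
    using \<phi> unfolding deriv_bounded_on_def by blast
  then show "(\<psi> \<circ> \<phi>) ` M \<subseteq> M"
    using \<psi> unfolding deriv_bounded_on_def by auto
  fix x assume x: "x \<in> M"
  obtain A where A: "has_curve_derivative M \<phi> x A"
      "\<And>v. v \<in> tangent_space M x \<Longrightarrow> norm (A v) \<le> L * norm v"
    by (rule deriv_bounded_onE[OF \<phi> x]) (rule that)
  obtain B where B: "has_curve_derivative M \<psi> (\<phi> x) B"
      "\<And>w. w \<in> tangent_space M (\<phi> x) \<Longrightarrow> norm (B w) \<le> L' * norm w"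
    by (rule deriv_bounded_onE[OF \<psi> deriv_bounded_on_into[OF \<phi> x]]) (rule that)
  have "norm (B (A v)) \<le> L' * L * norm v" if v: "v \<in> tangent_space M x" for v
  proof -
    have "norm (B (A v)) \<le> L' * norm (A v)"
      using B(2) has_curve_derivative_tangent_space[OF A(1) \<phi>_into v] .
    also have "\<dots> \<le> L' * (L * norm v)"
      using A(2)[OF v] \<open>0 \<le> L'\<close> by (rule mult_left_mono)
    finally show ?thesis
      by (simp add: mult.assoc)
  qed
  with has_curve_derivative_comp[OF A(1) B(1) \<phi>_into]
  show "\<exists>C. has_curve_derivative M (\<psi> \<circ> \<phi>) x C \<and>
      (\<forall>v\<in>tangent_space M x. norm (C v) \<le> L' * L * norm v)"
    by auto
qed

lemma deriv_bounded_on_id: "deriv_bounded_on M id 1"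
  unfolding deriv_bounded_on_def has_curve_derivative_def by (auto intro!: exI[of _ id])

lemma deriv_bounded_on_funpow:
  assumes "deriv_bounded_on M \<phi> L" "0 \<le> L"
  shows "deriv_bounded_on M (\<phi> ^^ n) (L ^ n)"
proof (induction n)
  case 0
  show ?case
    using deriv_bounded_on_id by (simp add: id_def)
next
  case (Suc n)
  then show ?case
    using deriv_bounded_on_comp[OF assms(1) Suc assms(2)] by (simp add: comp_def)
qed

lemma mderiv_eq:
  assumes "has_curve_derivative M \<phi> x A" "v \<in> tangent_space M x"
  shows "mderiv M \<phi> x v = A v"
  unfolding mderiv_def
proof (rule the_equality)
  obtain \<gamma> where \<gamma>: "\<forall>t. \<gamma> t \<in> M" "\<gamma> 0 = x" "(\<gamma> has_vector_derivative v) (at 0)"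
    using assms(2) unfolding tangent_space_def by blast
  fix w
  assume "\<forall>\<gamma>. (\<forall>t. \<gamma> t \<in> M) \<and> \<gamma> 0 = x \<and> (\<gamma> has_vector_derivative v) (at 0)
            \<longrightarrow> ((\<phi> \<circ> \<gamma>) has_vector_derivative w) (at 0)"
  with \<gamma> have "((\<phi> \<circ> \<gamma>) has_vector_derivative w) (at 0)"
    by blast
  moreover from \<gamma> assms(1) have "((\<phi> \<circ> \<gamma>) has_vector_derivative A v) (at 0)"
    unfolding has_curve_derivative_def by blast
  ultimately show "w = A v"
    by (rule vector_derivative_unique_at)
qed (use assms(1) in \<open>simp add: has_curve_derivative_def\<close>)

lemma mderiv_norm_le:
  assumes "deriv_bounded_on M \<phi> L" "x \<in> M" "0 \<le> L"
  shows "0 \<le> mderiv_norm M \<phi> x" "mderiv_norm M \<phi> x \<le> L"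
proof -
  obtain A where A: "has_curve_derivative M \<phi> x A"
      "\<And>v. v \<in> tangent_space M x \<Longrightarrow> norm (A v) \<le> L * norm v"
    by (rule deriv_bounded_onE[OF assms(1,2)]) (rule that)
  let ?S = "{norm (mderiv M \<phi> x v) | v. v \<in> tangent_space M x \<and> norm v \<le> 1}"
  have zero: "norm (mderiv M \<phi> x 0) \<in> ?S"
    using tangent_space_zero[OF assms(2)] by force
  have bound: "s \<le> L" if "s \<in> ?S" for s
  proof -
    obtain v where v: "v \<in> tangent_space M x" "norm v \<le> 1" "s = norm (mderiv M \<phi> x v)"
      using \<open>s \<in> ?S\<close> by blast
    then have "s \<le> L * norm v"
      by (simp add: mderiv_eq[OF A(1)] A(2))
    also have "\<dots> \<le> L"
      using v(2) assms(3) by (simp add: mult_left_le)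
    finally show ?thesis .
  qed
  show "mderiv_norm M \<phi> x \<le> L"
    unfolding mderiv_norm_def using zero by (intro cSup_least bound) auto
  have "norm (mderiv M \<phi> x 0) \<le> Sup ?S"
    using zero bound by (intro cSup_upper bdd_aboveI) auto
  then show "0 \<le> mderiv_norm M \<phi> x"
    unfolding mderiv_norm_def by (meson norm_ge_zero order_trans)
qed

lemma ln_mderiv_norm_le:
  assumes "deriv_bounded_on M \<phi> L" "x \<in> M" "1 \<le> L"
  shows "ln (mderiv_norm M \<phi> x) \<le> ln L"
proof (cases "mderiv_norm M \<phi> x = 0")
  case False
  with mderiv_norm_le[OF assms(1,2)] assms(3) have "0 < mderiv_norm M \<phi> x" "mderiv_norm M \<phi> x \<le> L"
    by auto
  then show ?thesis
    by simp
  \<comment> \<open>A zero norm is covered by the junk value ln 0 = 0; this is why 1 \<le> L is assumed.\<close>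
qed (use assms(3) in simp)

lemma has_curve_derivative_local_extension:
  assumes "open U" "x \<in> U" "\<forall>y\<in>M \<inter> U. F y = \<phi> y" "(F has_derivative F') (at x)"
  shows "has_curve_derivative M \<phi> x F'"
  unfolding has_curve_derivative_def
proof (intro allI impI)
  fix \<gamma> v assume \<gamma>: "(\<forall>t. \<gamma> t \<in> M) \<and> \<gamma> 0 = x \<and> (\<gamma> has_vector_derivative v) (at 0)"
  have "(F has_derivative F') (at (\<gamma> 0) within range \<gamma>)"
    using assms(4) \<gamma> by (simp add: has_derivative_at_withinI)
  with \<gamma> have "((F \<circ> \<gamma>) has_vector_derivative F' v) (at 0)"
    using vector_derivative_diff_chain_within[of \<gamma> v 0 UNIV F F'] by simp
  moreover have "(\<gamma> \<longlongrightarrow> \<gamma> 0) (at 0)"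
    using \<gamma> has_vector_derivative_continuous[of \<gamma> v 0 UNIV] by (simp add: continuous_at)
  then have "\<forall>\<^sub>F t in at 0. \<gamma> t \<in> U"
    using \<gamma> assms(1,2) by (auto intro: topological_tendstoD)
  then have "\<forall>\<^sub>F t in at 0. (F \<circ> \<gamma>) t = (\<phi> \<circ> \<gamma>) t"
    by eventually_elim (use \<gamma> assms(3) in auto)
  moreover have "(F \<circ> \<gamma>) 0 = (\<phi> \<circ> \<gamma>) 0"
    using \<gamma> assms(2,3) by auto
  ultimately show "((\<phi> \<circ> \<gamma>) has_vector_derivative F' v) (at 0)"
    unfolding has_vector_derivative_def by (auto intro: has_derivative_transform_eventually)
qed

lemma smooth_map_on_locally_deriv_bounded:
  assumes "smooth_map_on M \<phi>" "p \<in> M"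
  shows "\<exists>N B. open N \<and> p \<in> N \<and>
           (\<forall>x\<in>M \<inter> N. \<exists>A. has_curve_derivative M \<phi> x A \<and> (\<forall>v. norm (A v) \<le> B * norm v))"
proof -
  obtain U F where U: "open U" "p \<in> U" "smooth_on U F" and F: "\<forall>y\<in>M \<inter> U. F y = \<phi> y"
    using assms unfolding smooth_map_on_def by blast
  have "Ck_on (Suc 0) U F"
    using U(3) unfolding smooth_on_def by blast
  then obtain F' where F': "\<And>x. x \<in> U \<Longrightarrow> (F has_derivative F' x) (at x)"
    and F'_cont: "\<And>v. continuous_on U (\<lambda>x. F' x v)"
    by auto
  define B where "B x = (\<Sum>b\<in>Basis. norm (F' x b))" for x
  have "continuous_on U B"
    unfolding B_def by (intro continuous_on_sum continuous_on_norm F'_cont)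
  then have N: "open (U \<inter> B -` {..<B p + 1})"
    using U(1) by (intro continuous_open_preimage) auto
  have "\<exists>A. has_curve_derivative M \<phi> x A \<and> (\<forall>v. norm (A v) \<le> (B p + 1) * norm v)"
    if x: "x \<in> M \<inter> (U \<inter> B -` {..<B p + 1})" for x
  proof (intro exI conjI allI)
    show "has_curve_derivative M \<phi> x (F' x)"
      using U(1) x F F'[of x] by (intro has_curve_derivative_local_extension) auto
    fix v
    have "bounded_linear (F' x)"
      using F'[of x] x has_derivative_bounded_linear by blast
    then have "norm (F' x v) \<le> onorm (F' x) * norm v"
      by (rule onorm)
    also have "\<dots> \<le> (B p + 1) * norm v"
      using onorm_componentwise[OF \<open>bounded_linear (F' x)\<close>] x
      by (intro mult_right_mono) (auto simp: B_def)
    finally show "norm (F' x v) \<le> (B p + 1) * norm v" .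
  qed
  with N U(2) show ?thesis
    by (intro exI[of _ "U \<inter> B -` {..<B p + 1}"] exI[of _ "B p + 1"]) auto
qed

lemma compact_smooth_map_deriv_bounded:
  assumes "compact M" "smooth_map_on M \<phi>" "\<phi> ` M \<subseteq> M"
  shows "\<exists>L. deriv_bounded_on M \<phi> L"
proof -
  have "\<forall>p. \<exists>N B. p \<in> M \<longrightarrow> open N \<and> p \<in> N \<and>
      (\<forall>x\<in>M \<inter> N. \<exists>A. has_curve_derivative M \<phi> x A \<and> (\<forall>v. norm (A v) \<le> B * norm v))"
    using smooth_map_on_locally_deriv_bounded[OF assms(2)] by blast
  then obtain N B where NB: "\<And>p. p \<in> M \<Longrightarrow> open (N p) \<and> p \<in> N p \<and>
      (\<forall>x\<in>M \<inter> N p. \<exists>A. has_curve_derivative M \<phi> x A \<and> (\<forall>v. norm (A v) \<le> B p * norm v))"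
    unfolding choice_iff by blast
  then have "\<And>p. p \<in> M \<Longrightarrow> open (N p)" "M \<subseteq> (\<Union>p\<in>M. N p)"
    by blast+
  then obtain C where C: "C \<subseteq> M" "finite C" "M \<subseteq> (\<Union>c\<in>C. N c)"
    by (rule compactE_image[OF assms(1)])
  have "deriv_bounded_on M \<phi> (\<Sum>c\<in>C. \<bar>B c\<bar>)"
  proof (rule deriv_bounded_onI[OF assms(3)])
    fix x assume "x \<in> M"
    then obtain c where c: "c \<in> C" "x \<in> N c"
      using C(3) by blast
    then obtain A where A: "has_curve_derivative M \<phi> x A" "\<And>v. norm (A v) \<le> B c * norm v"
      using NB[of c] C(1) \<open>x \<in> M\<close> by blast
    have "B c \<le> (\<Sum>c\<in>C. \<bar>B c\<bar>)"
      using member_le_sum[of c C "\<lambda>c. \<bar>B c\<bar>"] c(1) C(2) by force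
    then have "norm (A v) \<le> (\<Sum>c\<in>C. \<bar>B c\<bar>) * norm v" for v
      using A(2)[of v] by (meson mult_right_mono norm_ge_zero order_trans)
    with A(1) show "\<exists>A. has_curve_derivative M \<phi> x A \<and>
        (\<forall>v\<in>tangent_space M x. norm (A v) \<le> (\<Sum>c\<in>C. \<bar>B c\<bar>) * norm v)"
      by blast
  qed
  then show ?thesis ..
qed

lemma compact_smooth_maps_common_deriv_bound:
  assumes "compact M" "finite \<Phi>" "\<And>\<phi>. \<phi> \<in> \<Phi> \<Longrightarrow> smooth_map_on M \<phi> \<and> \<phi> ` M \<subseteq> M"
  shows "\<exists>L\<ge>1. \<forall>\<phi>\<in>\<Phi>. deriv_bounded_on M \<phi> L"
proof -
  have "\<forall>\<phi>\<in>\<Phi>. \<exists>L. deriv_bounded_on M \<phi> L"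
    using compact_smooth_map_deriv_bounded[OF assms(1)] assms(3) by blast
  then obtain L\<Phi> where L\<Phi>: "\<And>\<phi>. \<phi> \<in> \<Phi> \<Longrightarrow> deriv_bounded_on M \<phi> (L\<Phi> \<phi>)"
    by (blast dest: bchoice)
  have "L\<Phi> \<phi> \<le> 1 + (\<Sum>\<psi>\<in>\<Phi>. \<bar>L\<Phi> \<psi>\<bar>)" if "\<phi> \<in> \<Phi>" for \<phi>
    using member_le_sum[of \<phi> \<Phi> "\<lambda>\<psi>. \<bar>L\<Phi> \<psi>\<bar>"] that assms(2) by force
  with L\<Phi> show ?thesis
    by (intro exI[of _ "1 + (\<Sum>\<psi>\<in>\<Phi>. \<bar>L\<Phi> \<psi>\<bar>)"]) (auto intro: deriv_bounded_on_mono sum_nonneg)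
qed

lemma funpow_mem:
  assumes "\<And>x. x \<in> M \<Longrightarrow> \<phi> x \<in> M" "x \<in> M"
  shows "(\<phi> ^^ n) x \<in> M"
  by (induction n) (use assms in auto)

lemma funpow_commute_on:
  assumes "\<And>x. x \<in> M \<Longrightarrow> \<phi> x \<in> M" "\<And>x. x \<in> M \<Longrightarrow> \<psi> (\<phi> x) = \<phi> (\<psi> x)" "x \<in> M"
  shows "\<psi> ((\<phi> ^^ n) x) = (\<phi> ^^ n) (\<psi> x)"
  by (induction n) (simp_all add: assms funpow_mem)

lemma funpow_inv_into_cancel:
  assumes "bij_betw \<phi> M M" "x \<in> M"
  shows "(\<phi> ^^ n) ((inv_into M \<phi> ^^ n) x) = x"
  using assms(2)
proof (induction n arbitrary: x)
  case (Suc n)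
  have inv: "\<And>y. y \<in> M \<Longrightarrow> inv_into M \<phi> y \<in> M" "\<And>y. y \<in> M \<Longrightarrow> \<phi> (inv_into M \<phi> y) = y"
    using assms(1) by (auto simp: bij_betw_def inv_into_into f_inv_into_f)
  have "(inv_into M \<phi> ^^ n) x \<in> M"
    using inv(1) Suc.prems by (rule funpow_mem)
  then show ?case
    unfolding funpow_Suc_right[where f = \<phi>] using Suc inv(2) by simp
qed simp

locale heisenberg_action =
  fixes M :: "'a set" and f g h :: "'a \<Rightarrow> 'a"
  assumes bij_f: "bij_betw f M M" and bij_g: "bij_betw g M M"
    and f_h_commute: "\<And>x. x \<in> M \<Longrightarrow> f (h x) = h (f x)"
    and g_h_commute: "\<And>x. x \<in> M \<Longrightarrow> g (h x) = h (g x)"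
    and commutator: "\<And>x. x \<in> M \<Longrightarrow> f (g (inv_into M f (inv_into M g x))) = h x"
begin

lemma f_into: "x \<in> M \<Longrightarrow> f x \<in> M"
  using bij_f by (rule bij_betw_apply)

lemma g_into: "x \<in> M \<Longrightarrow> g x \<in> M"
  using bij_g by (rule bij_betw_apply)

lemma inv_f_into: "x \<in> M \<Longrightarrow> inv_into M f x \<in> M"
  using bij_betw_inv_into[OF bij_f] by (rule bij_betw_apply)

lemma inv_g_into: "x \<in> M \<Longrightarrow> inv_into M g x \<in> M"
  using bij_betw_inv_into[OF bij_g] by (rule bij_betw_apply)

lemma h_into: "x \<in> M \<Longrightarrow> h x \<in> M"
  by (simp flip: commutator add: f_into g_into inv_f_into inv_g_into)

lemma f_g_swap: "x \<in> M \<Longrightarrow> f (g x) = h (g (f x))"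
  using commutator[of "g (f x)"] bij_f bij_g
  by (simp add: f_into g_into bij_betw_def)

lemma f_funpow_g_swap:
  assumes "x \<in> M"
  shows "f ((g ^^ b) x) = (h ^^ b) ((g ^^ b) (f x))"
proof (induction b)
  case (Suc b)
  have "f ((g ^^ Suc b) x) = h (g (f ((g ^^ b) x)))"
    using assms by (simp add: f_g_swap funpow_mem g_into)
  also have "\<dots> = h (g ((h ^^ b) ((g ^^ b) (f x))))"
    by (simp only: Suc.IH)
  also have "\<dots> = (h ^^ Suc b) ((g ^^ Suc b) (f x))"
    using assms
    by (simp add: funpow_commute_on[of M h g] h_into g_h_commute funpow_mem f_into g_into)
  finally show ?case .
qed simp

lemma funpow_f_g_swap:
  assumes "x \<in> M"
  shows "(f ^^ a) ((g ^^ b) x) = (h ^^ (a * b)) ((g ^^ b) ((f ^^ a) x))"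
proof (induction a)
  case (Suc a)
  have fa: "(f ^^ a) x \<in> M"
    using f_into assms by (rule funpow_mem)
  have "(f ^^ Suc a) ((g ^^ b) x) = f ((h ^^ (a * b)) ((g ^^ b) ((f ^^ a) x)))"
    by (simp add: Suc.IH)
  also have "\<dots> = (h ^^ (a * b)) (f ((g ^^ b) ((f ^^ a) x)))"
    using fa by (simp add: funpow_commute_on[of M h f] h_into f_h_commute funpow_mem g_into)
  also have "\<dots> = (h ^^ (a * b)) ((h ^^ b) ((g ^^ b) (f ((f ^^ a) x))))"
    using fa by (simp add: f_funpow_g_swap)
  also have "\<dots> = (h ^^ (Suc a * b)) ((g ^^ b) ((f ^^ Suc a) x))"
    by (simp only: mult_Suc add.commute[of b] funpow_add funpow.simps(2) comp_apply)
  finally show ?case .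
qed simp

lemma funpow_h_square_eq_commutator:
  assumes "x \<in> M"
  shows "(h ^^ (a * a)) x = (f ^^ a) ((g ^^ a) ((inv_into M f ^^ a) ((inv_into M g ^^ a) x)))"
proof -
  have y: "(inv_into M f ^^ a) ((inv_into M g ^^ a) x) \<in> M"
    using assms by (intro funpow_mem inv_f_into inv_g_into)
  have "(f ^^ a) ((g ^^ a) ((inv_into M f ^^ a) ((inv_into M g ^^ a) x)))
      = (h ^^ (a * a)) ((g ^^ a) ((f ^^ a) ((inv_into M f ^^ a) ((inv_into M g ^^ a) x))))"
    using y by (rule funpow_f_g_swap)
  also have "\<dots> = (h ^^ (a * a)) x"
    using assms bij_f bij_g by (simp add: funpow_inv_into_cancel funpow_mem inv_g_into)
  finally show ?thesis ..
qed

end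

lemma deriv_bounded_on_heisenberg_square:
  fixes M :: "'a::euclidean_space set"
  assumes "heisenberg_action M f g h" "0 \<le> L"
    and "\<forall>\<phi>\<in>{f, g, inv_into M f, inv_into M g}. deriv_bounded_on M \<phi> L"
  shows "deriv_bounded_on M (h ^^ (a * a)) (L ^ (4 * a))"
proof -
  have "deriv_bounded_on M ((f ^^ a) \<circ> (g ^^ a) \<circ> (inv_into M f ^^ a) \<circ> (inv_into M g ^^ a))
      (L ^ a * L ^ a * L ^ a * L ^ a)"
    using assms(2,3) by (intro deriv_bounded_on_comp deriv_bounded_on_funpow) auto
  moreover have "L ^ a * L ^ a * L ^ a * L ^ a = L ^ (4 * a)"
    by (metis mult.commute power_mult power4_eq_xxxx)
  ultimately show ?thesis
    using heisenberg_action.funpow_h_square_eq_commutator[OF assms(1)]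
    by (auto intro: deriv_bounded_on_cong)
qed

lemma deriv_bounded_on_heisenberg_funpow:
  fixes M :: "'a::euclidean_space set"
  assumes "heisenberg_action M f g h" "1 \<le> L"
    and "\<forall>\<phi>\<in>{f, g, h, inv_into M f, inv_into M g}. deriv_bounded_on M \<phi> L"
  shows "deriv_bounded_on M (h ^^ n) (L ^ (6 * floor_sqrt n))"
proof -
  define a where "a = floor_sqrt n"
  define r where "r = n - a * a"
  have "a * a \<le> n" "n < Suc a * Suc a"
    using floor_sqrt_power2_le[of n] Suc_floor_sqrt_power2_gt[of n]
    unfolding a_def power2_eq_square .
  then have "h ^^ n = h ^^ r \<circ> h ^^ (a * a)" "r \<le> 2 * a"
    by (auto simp: r_def simp flip: funpow_add)
  moreover have "deriv_bounded_on M (h ^^ r \<circ> h ^^ (a * a)) (L ^ r * L ^ (4 * a))"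
    using assms
    by (intro deriv_bounded_on_comp deriv_bounded_on_funpow deriv_bounded_on_heisenberg_square) auto
  moreover have "L ^ r * L ^ (4 * a) \<le> L ^ (6 * a)"
    using \<open>r \<le> 2 * a\<close> assms(2) by (simp flip: power_add add: power_increasing)
  ultimately show ?thesis
    unfolding a_def by (auto intro: deriv_bounded_on_mono)
qed

lemma of_nat_floor_sqrt_le_sqrt: "real (floor_sqrt n) \<le> sqrt (real n)"
  by (rule real_le_rsqrt) (metis floor_sqrt_power2_le of_nat_le_iff of_nat_power)

theorem theorem5:
  fixes M :: "'a::euclidean_space set" and f g h :: "'a \<Rightarrow> 'a"
  assumes "smooth_submanifold M" and "compact M"
    and "diffeomorphism_on M f" and "diffeomorphism_on M g" and "diffeomorphism_on M h"
    and "\<forall>x\<in>M. f (h x) = h (f x)" and "\<forall>x\<in>M. g (h x) = h (g x)"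
    and "\<forall>x\<in>M. f (g (inv_into M f (inv_into M g x))) = h x"
  shows "\<exists>K C. K > 0 \<and> C > 0 \<and>
           (\<forall>x\<in>M. \<forall>n::nat. ln (mderiv_norm M (h ^^ n) x) \<le> K * sqrt (real n) + C)"
proof -
  have heisenberg: "heisenberg_action M f g h"
    using assms(3-8) unfolding diffeomorphism_on_def by unfold_locales auto
  have "\<forall>\<phi>\<in>{f, g, h, inv_into M f, inv_into M g}. smooth_map_on M \<phi> \<and> bij_betw \<phi> M M"
    using assms(3-5) bij_betw_inv_into[of _ M M] unfolding diffeomorphism_on_def by auto
  then have "\<exists>L\<ge>1. \<forall>\<phi>\<in>{f, g, h, inv_into M f, inv_into M g}. deriv_bounded_on M \<phi> L"
    by (intro compact_smooth_maps_common_deriv_bound assms(2)) (auto simp: bij_betw_def)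
  then obtain L where L: "1 \<le> L"
    and bounds: "\<forall>\<phi>\<in>{f, g, h, inv_into M f, inv_into M g}. deriv_bounded_on M \<phi> L"
    by blast
  have "0 \<le> ln L"
    using L by simp
  define K where "K = 6 * ln L + 1"
  have "ln (mderiv_norm M (h ^^ n) x) \<le> K * sqrt (real n) + 1" if "x \<in> M" for x n
  proof -
    have "ln (mderiv_norm M (h ^^ n) x) \<le> ln (L ^ (6 * floor_sqrt n))"
      using deriv_bounded_on_heisenberg_funpow[OF heisenberg L bounds] that
      by (rule ln_mderiv_norm_le) (use L in simp)
    also have "\<dots> = 6 * ln L * real (floor_sqrt n)"
      using L by (simp add: ln_realpow)
    also have "\<dots> \<le> K * sqrt (real n)"
      using \<open>0 \<le> ln L\<close> of_nat_floor_sqrt_le_sqrt[of n] unfolding K_def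
      by (intro mult_mono) auto
    finally show ?thesis
      by simp
  qed
  moreover have "K > 0"
    using \<open>0 \<le> ln L\<close> unfolding K_def by simp
  ultimately show ?thesis
    by (intro exI[of _ K] exI[of _ 1]) auto
qed

end
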